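(* Let $\mu\in\mathcal{D}(\mathrm{Mem}[S])$, let $\mathcal{S}=\{S_1,\dots,S_N\}$ be a partition of $S$, let $\mathcal{T}=\{T_1,\dots,T_N\}$ be a partition of a finite set $T$ of variables, and let $f_i:\mathrm{Mem}[S_i]\to\mathrm{Mem}[T_i]$ ($1\le i\le N$) be either all non-decreasing or all non-increasing with respect to the pointwise orders. Let $\mu'\in\mathcal{D}(\mathrm{Mem}[T])$ be the distribution of the memory $f_1(p_{S_1}m)\bowtie\cdots\bowtie f_N(p_{S_N}m)$ for $m\sim\mu$, where $\bowtie$ denotes union of memories with disjoint domains. If $\mu$ is $\mathcal{S}$-PNA, then $\mu'$ is $\mathcal{T}$-PNA.
   Context: Values are real numbers; for finite $S$, $\mathrm{Mem}[S]$ is the set of maps $S\to\mathbb{R}$ ordered pointwise; $p_A$ is restriction; $\mathcal{D}(\cdot)$ denotes countably supported probability distributions. A partition is a set of pairwise disjoint nonempty sets; $\mathcal{T}$ coarsens $\mathcal{S}$ if $\bigcup\mathcal{T}=\bigcup\mathcal{S}$ and each element of $\mathcal{T}$ is a union of a subfamily of $\mathcal{S}$. For a partition $\mathcal{S}$ with $\bigcup\mathcal{S}\subseteq\mathrm{dom}(\mu)$, $\mu$ is $\mathcal{S}$-PNA if for every $\mathcal{T}$ coarsening $\mathcal{S}$ and every family $(f_A:\mathrm{Mem}[A]\to[0,\infty))_{A\in\mathcal{T}}$ all non-decreasing or all non-increasing, $\mathbb{E}_{m\sim\mu}[\prod_{A\in\mathcal{T}}f_A(p_Am)]\le\prod_{A\in\mathcal{T}}\mathbb{E}_{m\sim\mu}[f_A(p_Am)]$.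 *)

theory Defs
  imports "HOL-Probability.Probability"
begin

text \<open>Memories over a finite set of variables D: maps D to the reals, represented
  as extensional functions (value undefined outside D).\<close>
definition Mem :: "'v set \<Rightarrow> ('v \<Rightarrow> real) set" where
  "Mem D = (D \<rightarrow>\<^sub>E (UNIV :: real set))"

definition mem_le :: "'v set \<Rightarrow> ('v \<Rightarrow> real) \<Rightarrow> ('v \<Rightarrow> real) \<Rightarrow> bool" where
  "mem_le D m m' = (\<forall>x\<in>D. m x \<le> m' x)"

definition proj :: "'v set \<Rightarrow> ('v \<Rightarrow> real) \<Rightarrow> ('v \<Rightarrow> real)" where
  "proj A m = restrict m A"

definition is_partition :: "'v set set \<Rightarrow> bool" where
  "is_partition P = ((\<forall>A\<in>P. A \<noteq> {}) \<and> pairwise disjnt P)"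

definition coarsens :: "'v set set \<Rightarrow> 'v set set \<Rightarrow> bool" where
  "coarsens T S = (is_partition T \<and> \<Union>T = \<Union>S \<and> (\<forall>A\<in>T. \<exists>F\<subseteq>S. A = \<Union>F))"

definition nondecr_on :: "'v set \<Rightarrow> (('v \<Rightarrow> real) \<Rightarrow> real) \<Rightarrow> bool" where
  "nondecr_on A f = (\<forall>m\<in>Mem A. \<forall>m'\<in>Mem A. mem_le A m m' \<longrightarrow> f m \<le> f m')"

definition nonincr_on :: "'v set \<Rightarrow> (('v \<Rightarrow> real) \<Rightarrow> real) \<Rightarrow> bool" where
  "nonincr_on A f = (\<forall>m\<in>Mem A. \<forall>m'\<in>Mem A. mem_le A m m' \<longrightarrow> f m' \<le> f m)"

text \<open>S-PNA (negative association w.r.t. the partition S). Expectations of the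
  nonnegative functions are taken as extended nonnegative reals (nn_integral),
  so infinite expectations are allowed.\<close>
definition PNA :: "('v \<Rightarrow> real) pmf \<Rightarrow> 'v set set \<Rightarrow> bool" where
  "PNA \<mu> S = (\<forall>T (f :: 'v set \<Rightarrow> ('v \<Rightarrow> real) \<Rightarrow> real). coarsens T S \<longrightarrow>
      (\<forall>A\<in>T. \<forall>m\<in>Mem A. 0 \<le> f A m) \<longrightarrow>
      ((\<forall>A\<in>T. nondecr_on A (f A)) \<or> (\<forall>A\<in>T. nonincr_on A (f A))) \<longrightarrow>
      (\<integral>\<^sup>+ m. ennreal (\<Prod>A\<in>T. f A (proj A m)) \<partial>measure_pmf \<mu>)
        \<le> (\<Prod>A\<in>T. \<integral>\<^sup>+ m. ennreal (f A (proj A m)) \<partial>measure_pmf \<mu>))"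

definition mem_nondecr :: "'v set \<Rightarrow> 'v set \<Rightarrow> (('v \<Rightarrow> real) \<Rightarrow> ('v \<Rightarrow> real)) \<Rightarrow> bool" where
  "mem_nondecr A B g = (\<forall>m\<in>Mem A. \<forall>m'\<in>Mem A. mem_le A m m' \<longrightarrow> mem_le B (g m) (g m'))"

definition mem_nonincr :: "'v set \<Rightarrow> 'v set \<Rightarrow> (('v \<Rightarrow> real) \<Rightarrow> ('v \<Rightarrow> real)) \<Rightarrow> bool" where
  "mem_nonincr A B g = (\<forall>m\<in>Mem A. \<forall>m'\<in>Mem A. mem_le A m m' \<longrightarrow> mem_le B (g m') (g m))"

definition join_mems :: "nat \<Rightarrow> (nat \<Rightarrow> 'v set) \<Rightarrow> (nat \<Rightarrow> ('v \<Rightarrow> real)) \<Rightarrow> ('v \<Rightarrow> real)" where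
  "join_mems N Tp g = (\<lambda>x. if \<exists>i<N. x \<in> Tp i then g (THE i. i < N \<and> x \<in> Tp i) x else undefined)"

end

theory Submission
  imports Defs
begin

text \<open>Every block A of a coarsening of the target partition is a union of blocks T_i, say for
  i in I(A); the corresponding unions \<beta>(A) of the blocks S_i form a coarsening of the source
  partition. The restriction of the joined memory to A depends only, and monotonically, on the
  restriction of m to \<beta>(A). Composing a monotone test function on A with this map therefore gives
  test functions on the blocks \<beta>(A) with a common direction of monotonicity, and the PNA inequality
  for \<mu> and these test functions is literally the one required for the image distribution.\<close>

lemma proj_in_Mem: "proj A m \<in> Mem A"
  unfolding proj_def Mem_def by auto

lemma proj_proj_subset: "A \<subseteq> B \<Longrightarrow> proj A (proj B m) = proj A m"
  unfolding proj_def by (auto simp: fun_eq_iff)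

lemma mem_le_proj: "mem_le B m m' \<Longrightarrow> A \<subseteq> B \<Longrightarrow> mem_le A (proj A m) (proj A m')"
  unfolding mem_le_def proj_def by auto

lemma coarsens_nonempty: "coarsens T S \<Longrightarrow> A \<in> T \<Longrightarrow> A \<noteq> {}"
  unfolding coarsens_def is_partition_def by simp

lemma coarsens_disjoint: "coarsens T S \<Longrightarrow> A \<in> T \<Longrightarrow> A' \<in> T \<Longrightarrow> A \<noteq> A' \<Longrightarrow> A \<inter> A' = {}"
  unfolding coarsens_def is_partition_def by (meson disjnt_def pairwiseD)

lemma coarsens_Union: "coarsens T S \<Longrightarrow> \<Union>T = \<Union>S"
  unfolding coarsens_def by simp

lemma coarsens_subfamily: "coarsens T S \<Longrightarrow> A \<in> T \<Longrightarrow> \<exists>F\<subseteq>S. A = \<Union>F"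
  unfolding coarsens_def by simp

lemma coarsensI:
  "is_partition T \<Longrightarrow> \<Union>T = \<Union>S \<Longrightarrow> (\<And>A. A \<in> T \<Longrightarrow> \<exists>F\<subseteq>S. A = \<Union>F) \<Longrightarrow> coarsens T S"
  unfolding coarsens_def by blast

lemma nondecr_on_comp_mem_nondecr:
  assumes "nondecr_on A F" "mem_nondecr B A h" "\<And>m. m \<in> Mem B \<Longrightarrow> h m \<in> Mem A"
  shows "nondecr_on B (\<lambda>m. F (h m))"
  using assms unfolding nondecr_on_def mem_nondecr_def by blast

lemma nonincr_on_comp_mem_nondecr:
  assumes "nonincr_on A F" "mem_nondecr B A h" "\<And>m. m \<in> Mem B \<Longrightarrow> h m \<in> Mem A"
  shows "nonincr_on B (\<lambda>m. F (h m))"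
  using assms unfolding nonincr_on_def mem_nondecr_def by blast

lemma nonincr_on_comp_mem_nonincr:
  assumes "nondecr_on A F" "mem_nonincr B A h" "\<And>m. m \<in> Mem B \<Longrightarrow> h m \<in> Mem A"
  shows "nonincr_on B (\<lambda>m. F (h m))"
  using assms unfolding nondecr_on_def nonincr_on_def mem_nonincr_def by blast

lemma nondecr_on_comp_mem_nonincr:
  assumes "nonincr_on A F" "mem_nonincr B A h" "\<And>m. m \<in> Mem B \<Longrightarrow> h m \<in> Mem A"
  shows "nondecr_on B (\<lambda>m. F (h m))"
  using assms unfolding nondecr_on_def nonincr_on_def mem_nonincr_def by blast

lemma monotone_test_functions_comp:
  assumes "(\<forall>A\<in>T'. mem_nondecr (\<beta> A) A (h A)) \<or> (\<forall>A\<in>T'. mem_nonincr (\<beta> A) A (h A))"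
    and "(\<forall>A\<in>T'. nondecr_on A (F A)) \<or> (\<forall>A\<in>T'. nonincr_on A (F A))"
    and "\<And>A m. A \<in> T' \<Longrightarrow> m \<in> Mem (\<beta> A) \<Longrightarrow> h A m \<in> Mem A"
  shows "(\<forall>A\<in>T'. nondecr_on (\<beta> A) (\<lambda>m. F A (h A m)))
       \<or> (\<forall>A\<in>T'. nonincr_on (\<beta> A) (\<lambda>m. F A (h A m)))"
  using assms(1)
proof
  assume "\<forall>A\<in>T'. mem_nondecr (\<beta> A) A (h A)"
  with assms(2,3) show ?thesis
    using nondecr_on_comp_mem_nondecr nonincr_on_comp_mem_nondecr by blast
next
  assume "\<forall>A\<in>T'. mem_nonincr (\<beta> A) A (h A)"
  with assms(2,3) show ?thesis
    using nonincr_on_comp_mem_nonincr nondecr_on_comp_mem_nonincr by blast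
qed

lemma PNA_map_pmf_coarsening:
  fixes g :: "('v \<Rightarrow> real) \<Rightarrow> ('v \<Rightarrow> real)" and \<beta> :: "'v set \<Rightarrow> 'v set"
  assumes pna: "PNA \<mu> S" and inj: "inj_on \<beta> T'" and co: "coarsens (\<beta> ` T') S"
    and local: "\<And>A m. A \<in> T' \<Longrightarrow> proj A (g (proj (\<beta> A) m)) = proj A (g m)"
    and gmono: "(\<forall>A\<in>T'. mem_nondecr (\<beta> A) A (\<lambda>m. proj A (g m)))
              \<or> (\<forall>A\<in>T'. mem_nonincr (\<beta> A) A (\<lambda>m. proj A (g m)))"
    and nn: "\<forall>A\<in>T'. \<forall>m\<in>Mem A. 0 \<le> F A m"
    and Fmono: "(\<forall>A\<in>T'. nondecr_on A (F A)) \<or> (\<forall>A\<in>T'. nonincr_on A (F A))"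
  shows "(\<integral>\<^sup>+ m. ennreal (\<Prod>A\<in>T'. F A (proj A m)) \<partial>measure_pmf (map_pmf g \<mu>))
       \<le> (\<Prod>A\<in>T'. \<integral>\<^sup>+ m. ennreal (F A (proj A m)) \<partial>measure_pmf (map_pmf g \<mu>))"
proof -
  define G where "G B m = F (inv_into T' \<beta> B) (proj (inv_into T' \<beta> B) (g m))" for B m
  have G_\<beta>: "G (\<beta> A) = (\<lambda>m. F A (proj A (g m)))" if "A \<in> T'" for A
    unfolding G_def using inv_into_f_f[OF inj that] by simp
  have "\<forall>B\<in>\<beta> ` T'. \<forall>m\<in>Mem B. 0 \<le> G B m"
    using nn by (auto simp: G_\<beta> proj_in_Mem)
  moreover have "(\<forall>B\<in>\<beta> ` T'. nondecr_on B (G B)) \<or> (\<forall>B\<in>\<beta> ` T'. nonincr_on B (G B))"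
    using monotone_test_functions_comp[OF gmono Fmono proj_in_Mem] G_\<beta> by auto
  ultimately have "(\<integral>\<^sup>+ m. ennreal (\<Prod>B\<in>\<beta> ` T'. G B (proj B m)) \<partial>measure_pmf \<mu>)
      \<le> (\<Prod>B\<in>\<beta> ` T'. \<integral>\<^sup>+ m. ennreal (G B (proj B m)) \<partial>measure_pmf \<mu>)"
    using pna co unfolding PNA_def by blast
  then show ?thesis
    by (simp add: prod.reindex[OF inj] G_\<beta> local cong: prod.cong)
qed

definition indexed_partition :: "nat \<Rightarrow> (nat \<Rightarrow> 'v set) \<Rightarrow> bool" where
  "indexed_partition N P \<longleftrightarrow> (\<forall>i<N. P i \<noteq> {}) \<and> (\<forall>i<N. \<forall>j<N. i \<noteq> j \<longrightarrow> P i \<inter> P j = {})"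

definition blocks :: "nat \<Rightarrow> (nat \<Rightarrow> 'v set) \<Rightarrow> 'v set \<Rightarrow> nat set" where
  "blocks N P A = {i. i < N \<and> P i \<subseteq> A}"

lemma blocks_subset: "blocks N P A \<subseteq> {..<N}"
  unfolding blocks_def by auto

lemma UN_blocks_eq:
  assumes "coarsens T' (P ` {..<N})" "A \<in> T'"
  shows "\<Union>(P ` blocks N P A) = A"
proof -
  from coarsens_subfamily[OF assms] obtain F where "F \<subseteq> P ` {..<N}" "A = \<Union>F"
    by (elim exE conjE)
  then show ?thesis unfolding blocks_def by blast
qed

lemma blocks_nonempty:
  assumes "coarsens T' (P ` {..<N})" "A \<in> T'"
  shows "blocks N P A \<noteq> {}"
  using UN_blocks_eq[OF assms] coarsens_nonempty[OF assms] by auto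

lemma blocks_disjoint:
  assumes "coarsens T' (P ` {..<N})" "indexed_partition N P"
    and "A \<in> T'" "A' \<in> T'" "A \<noteq> A'"
  shows "blocks N P A \<inter> blocks N P A' = {}"
  using coarsens_disjoint[OF assms(1,3-5)] assms(2)
  unfolding indexed_partition_def blocks_def by blast

lemma mem_blocks_cover:
  assumes "coarsens T' (P ` {..<N})" "indexed_partition N P" "i < N"
  shows "\<exists>A\<in>T'. i \<in> blocks N P A"
proof -
  obtain x where x: "x \<in> P i"
    using assms(2,3) unfolding indexed_partition_def by blast
  then obtain A where A: "A \<in> T'" "x \<in> A"
    using coarsens_Union[OF assms(1)] assms(3) by blast
  then obtain j where j: "j \<in> blocks N P A" "x \<in> P j"
    using UN_blocks_eq[OF assms(1) A(1)] by blast
  have "j < N" using j(1) unfolding blocks_def by simp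
  then have "j = i"
    using j(2) x assms(2,3) unfolding indexed_partition_def by blast
  then show ?thesis using A(1) j(1) by blast
qed

lemma Union_image_UN_blocks:
  assumes co: "coarsens T' (P ` {..<N})" and P: "indexed_partition N P"
  shows "\<Union>((\<lambda>A. \<Union>(Q ` blocks N P A)) ` T') = \<Union>(Q ` {..<N})"
proof
  show "\<Union>((\<lambda>A. \<Union>(Q ` blocks N P A)) ` T') \<subseteq> \<Union>(Q ` {..<N})"
    using blocks_subset by blast
  show "\<Union>(Q ` {..<N}) \<subseteq> \<Union>((\<lambda>A. \<Union>(Q ` blocks N P A)) ` T')"
  proof
    fix x assume "x \<in> \<Union>(Q ` {..<N})"
    then obtain i where "i < N" "x \<in> Q i" by blast
    moreover obtain A where "A \<in> T'" "i \<in> blocks N P A"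
      using mem_blocks_cover[OF co P \<open>i < N\<close>] by blast
    ultimately show "x \<in> \<Union>((\<lambda>A. \<Union>(Q ` blocks N P A)) ` T')" by blast
  qed
qed

lemma coarsens_UN_blocks:
  assumes co: "coarsens T' (P ` {..<N})" and P: "indexed_partition N P"
    and Q: "indexed_partition N Q"
  defines "\<beta> \<equiv> \<lambda>A. \<Union>(Q ` blocks N P A)"
  shows "coarsens (\<beta> ` T') (Q ` {..<N})" and "inj_on \<beta> T'"
proof -
  have \<beta>_ne: "\<beta> A \<noteq> {}" if A: "A \<in> T'" for A
  proof -
    obtain i where "i \<in> blocks N P A" using blocks_nonempty[OF co A] by blast
    moreover have "Q i \<noteq> {}"
      using calculation Q unfolding blocks_def indexed_partition_def by blast
    ultimately show ?thesis unfolding \<beta>_def by blast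
  qed
  have \<beta>_disj: "\<beta> A \<inter> \<beta> A' = {}" if "A \<in> T'" "A' \<in> T'" "A \<noteq> A'" for A A'
  proof -
    have "Q i \<inter> Q j = {}" if "i \<in> blocks N P A" "j \<in> blocks N P A'" for i j
      using that blocks_disjoint[OF co P \<open>A \<in> T'\<close> \<open>A' \<in> T'\<close> \<open>A \<noteq> A'\<close>] Q
      unfolding indexed_partition_def blocks_def by blast
    then show ?thesis unfolding \<beta>_def by blast
  qed
  show "inj_on \<beta> T'"
    by (rule inj_onI) (metis \<beta>_disj \<beta>_ne inf.idem)
  show "coarsens (\<beta> ` T') (Q ` {..<N})"
  proof (rule coarsensI)
    show "is_partition (\<beta> ` T')"
      using \<beta>_ne \<beta>_disj unfolding is_partition_def pairwise_def disjnt_def by blast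
    show "\<exists>F\<subseteq>Q ` {..<N}. B = \<Union>F" if "B \<in> \<beta> ` T'" for B
    proof -
      from that obtain A where "B = \<beta> A" "A \<in> T'" by (rule imageE)
      then have "B = \<Union>(Q ` blocks N P A)" by (simp add: \<beta>_def)
      moreover have "Q ` blocks N P A \<subseteq> Q ` {..<N}"
        by (rule image_mono[OF blocks_subset])
      ultimately show ?thesis by (intro exI[of _ "Q ` blocks N P A"] conjI)
    qed
    show "\<Union>(\<beta> ` T') = \<Union>(Q ` {..<N})"
      unfolding \<beta>_def by (rule Union_image_UN_blocks[OF co P])
  qed
qed

lemma join_mems_eq:
  assumes "\<forall>i<N. \<forall>j<N. i \<noteq> j \<longrightarrow> Tp i \<inter> Tp j = {}" "j < N" "x \<in> Tp j"
  shows "join_mems N Tp g x = g j x"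
proof -
  have "(THE i. i < N \<and> x \<in> Tp i) = j"
    using assms by (intro the_equality) blast+
  then show ?thesis using assms unfolding join_mems_def by auto
qed

lemma proj_join_mems_apply:
  assumes "indexed_partition N Tp" "I \<subseteq> {..<N}" "j \<in> I" "x \<in> Tp j"
  shows "proj (\<Union>(Tp ` I)) (join_mems N Tp g) x = g j x"
proof -
  have "j < N" using assms(2,3) by auto
  moreover have "\<forall>i<N. \<forall>j<N. i \<noteq> j \<longrightarrow> Tp i \<inter> Tp j = {}"
    using assms(1) unfolding indexed_partition_def by blast
  ultimately show ?thesis
    using assms(3,4) join_mems_eq[of N Tp j x g] unfolding proj_def by auto
qed

lemma proj_join_mems_local:
  assumes "indexed_partition N Tp" "I \<subseteq> {..<N}" "\<Union>(Sp ` I) \<subseteq> B"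
  shows "proj (\<Union>(Tp ` I)) (join_mems N Tp (\<lambda>i. f i (proj (Sp i) (proj B m))))
       = proj (\<Union>(Tp ` I)) (join_mems N Tp (\<lambda>i. f i (proj (Sp i) m)))"
proof
  fix x
  show "proj (\<Union>(Tp ` I)) (join_mems N Tp (\<lambda>i. f i (proj (Sp i) (proj B m)))) x
      = proj (\<Union>(Tp ` I)) (join_mems N Tp (\<lambda>i. f i (proj (Sp i) m))) x"
  proof (cases "x \<in> \<Union>(Tp ` I)")
    case True
    then obtain j where j: "j \<in> I" "x \<in> Tp j" by blast
    then have "proj (Sp j) (proj B m) = proj (Sp j) m"
      using assms(3) by (intro proj_proj_subset) auto
    then show ?thesis
      using proj_join_mems_apply[OF assms(1,2) j] by simp
  qed (simp add: proj_def)
qed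

lemma mem_le_proj_join_mems:
  assumes "indexed_partition N Tp" "I \<subseteq> {..<N}"
    and "\<And>i. i \<in> I \<Longrightarrow> mem_le (Tp i) (g i) (g' i)"
  shows "mem_le (\<Union>(Tp ` I)) (proj (\<Union>(Tp ` I)) (join_mems N Tp g))
                           (proj (\<Union>(Tp ` I)) (join_mems N Tp g'))"
  unfolding mem_le_def
proof
  fix x assume "x \<in> \<Union>(Tp ` I)"
  then obtain j where j: "j \<in> I" "x \<in> Tp j" by blast
  then have "g j x \<le> g' j x"
    using assms(3) unfolding mem_le_def by blast
  then show "proj (\<Union>(Tp ` I)) (join_mems N Tp g) x \<le> proj (\<Union>(Tp ` I)) (join_mems N Tp g') x"
    using proj_join_mems_apply[OF assms(1,2) j] by simp
qed

lemma mem_nondecr_proj_join_mems: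
  assumes "indexed_partition N Tp" "I \<subseteq> {..<N}" "\<Union>(Sp ` I) \<subseteq> B"
    and f: "\<forall>i\<in>I. mem_nondecr (Sp i) (Tp i) (f i)"
  shows "mem_nondecr B (\<Union>(Tp ` I))
           (\<lambda>m. proj (\<Union>(Tp ` I)) (join_mems N Tp (\<lambda>i. f i (proj (Sp i) m))))"
  unfolding mem_nondecr_def
proof (intro ballI impI mem_le_proj_join_mems[OF assms(1,2)])
  fix m m' i assume "mem_le B m m'" "i \<in> I"
  moreover have "Sp i \<subseteq> B" using assms(3) \<open>i \<in> I\<close> by blast
  ultimately show "mem_le (Tp i) (f i (proj (Sp i) m)) (f i (proj (Sp i) m'))"
    using f mem_le_proj proj_in_Mem unfolding mem_nondecr_def by blast
qed

lemma mem_nonincr_proj_join_mems: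
  assumes "indexed_partition N Tp" "I \<subseteq> {..<N}" "\<Union>(Sp ` I) \<subseteq> B"
    and f: "\<forall>i\<in>I. mem_nonincr (Sp i) (Tp i) (f i)"
  shows "mem_nonincr B (\<Union>(Tp ` I))
           (\<lambda>m. proj (\<Union>(Tp ` I)) (join_mems N Tp (\<lambda>i. f i (proj (Sp i) m))))"
  unfolding mem_nonincr_def
proof (intro ballI impI mem_le_proj_join_mems[OF assms(1,2)])
  fix m m' i assume "mem_le B m m'" "i \<in> I"
  moreover have "Sp i \<subseteq> B" using assms(3) \<open>i \<in> I\<close> by blast
  ultimately show "mem_le (Tp i) (f i (proj (Sp i) m')) (f i (proj (Sp i) m))"
    using f mem_le_proj proj_in_Mem unfolding mem_nonincr_def by blast
qed

lemma proj_join_mems_coarsening_local: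
  assumes "coarsens T' (Tp ` {..<N})" "indexed_partition N Tp" "A \<in> T'"
  shows "proj A (join_mems N Tp (\<lambda>i. f i (proj (Sp i) (proj (\<Union>(Sp ` blocks N Tp A)) m))))
       = proj A (join_mems N Tp (\<lambda>i. f i (proj (Sp i) m)))"
  using proj_join_mems_local[OF assms(2) blocks_subset[of N Tp A] order_refl, where f = f]
  unfolding UN_blocks_eq[OF assms(1,3)] .

lemma proj_join_mems_coarsening_monotone:
  assumes co: "coarsens T' (Tp ` {..<N})" and Tp: "indexed_partition N Tp"
    and "(\<forall>i<N. mem_nondecr (Sp i) (Tp i) (f i)) \<or> (\<forall>i<N. mem_nonincr (Sp i) (Tp i) (f i))"
  shows "(\<forall>A\<in>T'. mem_nondecr (\<Union>(Sp ` blocks N Tp A)) A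
                   (\<lambda>m. proj A (join_mems N Tp (\<lambda>i. f i (proj (Sp i) m)))))
       \<or> (\<forall>A\<in>T'. mem_nonincr (\<Union>(Sp ` blocks N Tp A)) A
                   (\<lambda>m. proj A (join_mems N Tp (\<lambda>i. f i (proj (Sp i) m)))))"
  using assms(3)
proof (elim disjE)
  assume "\<forall>i<N. mem_nondecr (Sp i) (Tp i) (f i)"
  then have "mem_nondecr (\<Union>(Sp ` blocks N Tp A)) A
               (\<lambda>m. proj A (join_mems N Tp (\<lambda>i. f i (proj (Sp i) m))))" if "A \<in> T'" for A
    using mem_nondecr_proj_join_mems[OF Tp blocks_subset[of N Tp A] order_refl, where f = f] blocks_subset
    unfolding UN_blocks_eq[OF co that] by blast
  then show ?thesis by blast
next
  assume "\<forall>i<N. mem_nonincr (Sp i) (Tp i) (f i)"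
  then have "mem_nonincr (\<Union>(Sp ` blocks N Tp A)) A
               (\<lambda>m. proj A (join_mems N Tp (\<lambda>i. f i (proj (Sp i) m))))" if "A \<in> T'" for A
    using mem_nonincr_proj_join_mems[OF Tp blocks_subset[of N Tp A] order_refl, where f = f] blocks_subset
    unfolding UN_blocks_eq[OF co that] by blast
  then show ?thesis by blast
qed

theorem mainTheorem18:
  fixes \<mu> :: "('v \<Rightarrow> real) pmf"
    and S T :: "'v set" and N :: nat
    and Sp Tp :: "nat \<Rightarrow> 'v set"
    and f :: "nat \<Rightarrow> ('v \<Rightarrow> real) \<Rightarrow> ('v \<Rightarrow> real)"
  assumes finS: "finite S" and finT: "finite T"
    and supp: "set_pmf \<mu> \<subseteq> Mem S"
    and Spart: "(\<forall>i<N. Sp i \<noteq> {}) \<and> (\<forall>i<N. \<forall>j<N. i \<noteq> j \<longrightarrow> Sp i \<inter> Sp j = {})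
                \<and> (\<Union>i<N. Sp i) = S"
    and Tpart: "(\<forall>i<N. Tp i \<noteq> {}) \<and> (\<forall>i<N. \<forall>j<N. i \<noteq> j \<longrightarrow> Tp i \<inter> Tp j = {})
                \<and> (\<Union>i<N. Tp i) = T"
    and fmap: "\<forall>i<N. \<forall>m\<in>Mem (Sp i). f i m \<in> Mem (Tp i)"
    and fmono: "(\<forall>i<N. mem_nondecr (Sp i) (Tp i) (f i)) \<or> (\<forall>i<N. mem_nonincr (Sp i) (Tp i) (f i))"
    and pna: "PNA \<mu> (Sp ` {..<N})"
  shows "PNA (map_pmf (\<lambda>m. join_mems N Tp (\<lambda>i. f i (proj (Sp i) m))) \<mu>) (Tp ` {..<N})"
  unfolding PNA_def
proof (intro allI impI)
  fix T' :: "'v set set" and F :: "'v set \<Rightarrow> ('v \<Rightarrow> real) \<Rightarrow> real"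
  assume co: "coarsens T' (Tp ` {..<N})" and nn: "\<forall>A\<in>T'. \<forall>m\<in>Mem A. 0 \<le> F A m"
    and Fmono: "(\<forall>A\<in>T'. nondecr_on A (F A)) \<or> (\<forall>A\<in>T'. nonincr_on A (F A))"
  have Tp: "indexed_partition N Tp" and Sp: "indexed_partition N Sp"
    using Tpart Spart unfolding indexed_partition_def by blast+
  show "(\<integral>\<^sup>+ m. ennreal (\<Prod>A\<in>T'. F A (proj A m))
          \<partial>measure_pmf (map_pmf (\<lambda>m. join_mems N Tp (\<lambda>i. f i (proj (Sp i) m))) \<mu>))
        \<le> (\<Prod>A\<in>T'. \<integral>\<^sup>+ m. ennreal (F A (proj A m))
          \<partial>measure_pmf (map_pmf (\<lambda>m. join_mems N Tp (\<lambda>i. f i (proj (Sp i) m))) \<mu>))"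
  proof (rule PNA_map_pmf_coarsening[OF pna, where \<beta> = "\<lambda>A. \<Union>(Sp ` blocks N Tp A)"])
    show "inj_on (\<lambda>A. \<Union>(Sp ` blocks N Tp A)) T'"
      and "coarsens ((\<lambda>A. \<Union>(Sp ` blocks N Tp A)) ` T') (Sp ` {..<N})"
      using coarsens_UN_blocks[OF co Tp Sp] by simp_all
  qed (use proj_join_mems_coarsening_local[OF co Tp]
         proj_join_mems_coarsening_monotone[OF co Tp fmono] nn Fmono in auto)
qed

end
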